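(* Let $Y,Z$ be the Pauli matrices and let $\alpha\in\mathbb{R}$ satisfy $\cos(\pi\alpha) \in \mathbb{Q}\setminus\{0,\pm 1,\pm 1/2\}$. Let $\mathcal{A}_2=\{g_1,g_2\}=\{e^{i\pi\alpha Z}, e^{i\pi\alpha Y}\}\subset SU(2)$, and for $U\in SU(2)$ and $\epsilon>0$ define the gate complexity $$C_\epsilon(U)=\min\Big\{\sum_{j=1}^k |n_j| : \|g_{i_1}^{n_1}g_{i_2}^{n_2}\cdots g_{i_k}^{n_k}-U\|<\epsilon\Big\},$$ the minimum being over all $k\in\mathbb{N}$, $i_j\in\{1,2\}$ and $n_1,\dots,n_k\in\mathbb{Z}$, where $\|A\|=[\mathrm{Tr}(A^\dagger A)]^{1/2}$ is the Hilbert–Schmidt norm. Then for every $U\in SU(2)$ and every $\delta>0$ there exist $U'\in SU(2)$ with $\|U'-U\|<\delta$ and a constant $D=D(\alpha,U')>1$ such that $$C_\epsilon(U') > \frac{1}{\log D}\log\left(\frac{1}{\epsilon}\right)+\mathcal{O}(\epsilon^0)\quad\text{as }\epsilon\to 0,$$ i.e. there is a constant $c$ such that $C_\epsilon(U') > \frac{1}{\log D}\log(1/\epsilon)+c$ for all sufficiently small $\epsilon>0$.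
   Context: The group generated by $\mathcal{A}_2$ and inverses is dense in $SU(2)$, so $C_\epsilon(U)$ is finite for every $\epsilon>0$. *)

theory Defs
  imports "HOL-Analysis.Analysis"
begin

type_synonym cmat2 = "complex^2^2"

definition pauliY :: cmat2 where
  "pauliY = (\<chi> i j. if i = j then 0 else if i = 1 then - \<i> else \<i>)"

definition pauliZ :: cmat2 where
  "pauliZ = (\<chi> i j. if i = j then (if i = 1 then 1 else -1) else 0)"

definition adj :: "cmat2 \<Rightarrow> cmat2" where
  "adj A = transpose (map_matrix cnj A)"

definition hs_norm :: "cmat2 \<Rightarrow> real" where
  "hs_norm A = sqrt (Re (trace (adj A ** A)))"

definition SU2 :: "cmat2 set" where
  "SU2 = {U. adj U ** U = mat 1 \<and> det U = 1}"

primrec mpow :: "cmat2 \<Rightarrow> nat \<Rightarrow> cmat2" where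
  "mpow A 0 = mat 1"
| "mpow A (Suc n) = A ** mpow A n"

definition minv :: "cmat2 \<Rightarrow> cmat2" where
  "minv A = (SOME B. A ** B = mat 1 \<and> B ** A = mat 1)"

definition mzpow :: "cmat2 \<Rightarrow> int \<Rightarrow> cmat2" where
  "mzpow A n = (if 0 \<le> n then mpow A (nat n) else mpow (minv A) (nat (- n)))"

definition mexp :: "cmat2 \<Rightarrow> cmat2" where
  "mexp A = (\<Sum>n. (1 / fact n) *\<^sub>R mpow A n)"

definition cscale :: "complex \<Rightarrow> cmat2 \<Rightarrow> cmat2" where
  "cscale c A = (\<chi> i j. c * A $ i $ j)"

definition gate :: "real \<Rightarrow> nat \<Rightarrow> cmat2" where
  "gate \<alpha> i = (if i = 1 then mexp (cscale (\<i> * complex_of_real (pi * \<alpha>)) pauliZ)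
                else mexp (cscale (\<i> * complex_of_real (pi * \<alpha>)) pauliY))"

text \<open>A word is a list of pairs (i_j, n_j); it denotes g_{i_1}^{n_1} ... g_{i_k}^{n_k}.\<close>
definition word_prod :: "real \<Rightarrow> (nat \<times> int) list \<Rightarrow> cmat2" where
  "word_prod \<alpha> ws = foldr (\<lambda>(i, n) M. mzpow (gate \<alpha> i) n ** M) ws (mat 1)"

definition word_cost :: "(nat \<times> int) list \<Rightarrow> nat" where
  "word_cost ws = sum_list (map (\<lambda>(i, n). nat \<bar>n\<bar>) ws)"

definition gate_complexity :: "real \<Rightarrow> real \<Rightarrow> cmat2 \<Rightarrow> nat" where
  "gate_complexity \<alpha> \<epsilon> U =
     (LEAST c. \<exists>ws. set ws \<subseteq> {1, 2} \<times> UNIV \<and> word_cost ws = c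
                    \<and> hs_norm (word_prod \<alpha> ws - U) < \<epsilon>)"

end

theory Submission
  imports Defs "HOL-Computational_Algebra.Polynomial"
begin

text \<open>
  Write \<open>cos (pi \<alpha>) = p / q\<close> with \<open>q \<ge> 2\<close> and put \<open>r = q sin (pi \<alpha>)\<close>, so that
  \<open>r\<^sup>2 = q\<^sup>2 - p\<^sup>2\<close> is an integer. Each \<open>g\<^sub>i\<^sup>\<plusminus>\<^sup>1\<close> equals \<open>q\<^sup>-\<^sup>1 (p I \<plusminus> r J\<^sub>i)\<close>
  with \<open>J\<^sub>i\<close> a Gaussian-integer matrix, hence a word \<open>W\<close> of cost \<open>N\<close> is \<open>q\<^sup>-\<^sup>N (P + r Q)\<close>
  with Gaussian-integer \<open>P, Q\<close>, and the conjugate \<open>q\<^sup>-\<^sup>N (P - r Q)\<close> is the same word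
  for \<open>-\<alpha>\<close>, again unitary. Thus \<open>|W\<^sub>1\<^sub>1|\<^sup>2 = (a + r b) / q\<^sup>2\<^sup>N\<close> with integers \<open>a, b\<close>
  and \<open>0 \<le> a - r b \<le> q\<^sup>2\<^sup>N\<close>. If the target \<open>U'\<close> has \<open>|U'\<^sub>1\<^sub>1|\<^sup>2 = u / v\<close> with
  \<open>v = (q + 1)\<^sup>j\<close> not dividing \<open>u\<close>, then \<open>u q\<^sup>2\<^sup>N / v\<close> is never an integer and the
  nonzero integer \<open>v\<^sup>2 (a + r b - u q\<^sup>2\<^sup>N / v) (a - r b - u q\<^sup>2\<^sup>N / v)\<close> forces
  \<open>||W\<^sub>1\<^sub>1|\<^sup>2 - u / v| \<ge> 1 / (v\<^sup>2 q\<^sup>4\<^sup>N)\<close>. So \<open>\<epsilon>\<close>-approximating \<open>U'\<close> costs at least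
  \<open>log (1 / \<epsilon>) / log q\<^sup>4 - O(1)\<close>. Such targets are dense in \<open>SU(2)\<close> (move the middle
  Euler angle), and the minimum defining the complexity is attained because \<open>\<alpha>\<close> is
  irrational by Niven's theorem, so that words are dense.
\<close>

definition mat2 :: "complex \<Rightarrow> complex \<Rightarrow> complex \<Rightarrow> complex \<Rightarrow> cmat2" where
  "mat2 a b c d = (\<chi> i j. if i = 1 then (if j = 1 then a else b) else (if j = 1 then c else d))"

lemma mat2_nth [simp]:
  "mat2 a b c d $ 1 $ 1 = a" "mat2 a b c d $ 1 $ 2 = b"
  "mat2 a b c d $ 2 $ 1 = c" "mat2 a b c d $ 2 $ 2 = d"
  by (simp_all add: mat2_def)

lemma cmat2_eq_iff:
  "(A :: cmat2) = B \<longleftrightarrow> A$1$1 = B$1$1 \<and> A$1$2 = B$1$2 \<and> A$2$1 = B$2$1 \<and> A$2$2 = B$2$2"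
  by (auto simp: vec_eq_iff forall_2)

lemma mat2_cases: "(A :: cmat2) = mat2 (A$1$1) (A$1$2) (A$2$1) (A$2$2)"
  by (simp add: cmat2_eq_iff)

lemma mat2_eq_iff [simp]: "mat2 a b c d = mat2 a' b' c' d' \<longleftrightarrow> a = a' \<and> b = b' \<and> c = c' \<and> d = d'"
  by (simp add: cmat2_eq_iff)

lemma mat2_mult [simp]:
  "mat2 a b c d ** mat2 e f g h = mat2 (a*e + b*g) (a*f + b*h) (c*e + d*g) (c*f + d*h)"
  by (simp add: cmat2_eq_iff matrix_matrix_mult_def sum_2)

lemma mat2_one: "(mat 1 :: cmat2) = mat2 1 0 0 1"
  by (simp add: cmat2_eq_iff mat_def)

lemma mat2_add [simp]: "mat2 a b c d + mat2 e f g h = mat2 (a+e) (b+f) (c+g) (d+h)"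
  and mat2_diff [simp]: "mat2 a b c d - mat2 e f g h = mat2 (a-e) (b-f) (c-g) (d-h)"
  and mat2_uminus [simp]: "- mat2 a b c d = mat2 (-a) (-b) (-c) (-d)"
  and mat2_scaleR [simp]: "x *\<^sub>R mat2 a b c d = mat2 (x *\<^sub>R a) (x *\<^sub>R b) (x *\<^sub>R c) (x *\<^sub>R d)"
  by (simp_all add: cmat2_eq_iff)

lemma adj_mat2 [simp]: "adj (mat2 a b c d) = mat2 (cnj a) (cnj c) (cnj b) (cnj d)"
  by (simp add: cmat2_eq_iff adj_def transpose_def)

lemma det_mat2 [simp]: "det (mat2 a b c d) = a*d - b*c"
  by (simp add: det_2)

lemma adj_mult: "adj (A ** B) = adj B ** adj A"
  by (simp add: cmat2_eq_iff adj_def transpose_def matrix_matrix_mult_def sum_2 mult.commute)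

lemma adj_mult_cancel_left: "adj U ** U = mat 1 \<Longrightarrow> adj (U ** A) ** (U ** A) = adj A ** A"
  by (simp add: adj_mult matrix_mul_assoc) (metis matrix_mul_assoc matrix_mul_lid)

lemma cmat2_mult_add_left: "(A + B) ** (C :: cmat2) = A ** C + B ** C"
  and cmat2_mult_diff_left: "(A - B) ** (C :: cmat2) = A ** C - B ** C"
  and cmat2_mult_diff_right: "C ** (A - B) = C ** A - C ** (B :: cmat2)"
  by (simp_all add: cmat2_eq_iff matrix_matrix_mult_def sum_2 algebra_simps)

section \<open>The gates as rotations\<close>

lemma mexp_scaleR_of_square_eq_minus_one:
  assumes J: "J ** J = - mat 1"
  shows "mexp (\<theta> *\<^sub>R J) = cos \<theta> *\<^sub>R mat 1 + sin \<theta> *\<^sub>R J"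
proof -
  let ?x = "\<lambda>n. (\<i> * complex_of_real \<theta>) ^ n"
  have pow: "mpow (\<theta> *\<^sub>R J) n = Re (?x n) *\<^sub>R mat 1 + Im (?x n) *\<^sub>R J" for n
  proof (induction n)
    case (Suc n)
    have "\<theta> *\<^sub>R J ** (a *\<^sub>R mat 1 + b *\<^sub>R J) = (- \<theta> * b) *\<^sub>R mat 1 + (\<theta> * a) *\<^sub>R J" for a b
      using J
      by (simp add: matrix_add_ldistrib matrix_scalar_ac mult.commute flip: scalar_matrix_assoc)
    then show ?case by (simp add: Suc)
  qed simp
  have exp_series: "(\<lambda>n. ?x n /\<^sub>R fact n) sums exp (\<i> * \<theta>)"
    by (rule exp_converges)
  have "(\<lambda>n. (Re (?x n) / fact n) *\<^sub>R mat 1 + (Im (?x n) / fact n) *\<^sub>R J)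
          sums (cos \<theta> *\<^sub>R mat 1 + sin \<theta> *\<^sub>R J)"
    using sums_Re[OF exp_series] sums_Im[OF exp_series]
    by (intro sums_add sums_scaleR_left) (simp_all add: Re_exp Im_exp divide_inverse mult.commute)
  then show ?thesis
    unfolding mexp_def pow by (intro sums_unique[symmetric]) (simp add: scaleR_add_right)
qed

text \<open>\<open>rot_gen 1 = \<i> Z\<close> and \<open>rot_gen 2 = \<i> Y\<close>, so \<open>rot i \<theta> = exp (\<i> \<theta> \<sigma>\<^sub>i)\<close>.\<close>
definition rot_gen :: "nat \<Rightarrow> cmat2" where
  "rot_gen i = (if i = 1 then mat2 \<i> 0 0 (- \<i>) else mat2 0 1 (- 1) 0)"

definition rot :: "nat \<Rightarrow> real \<Rightarrow> cmat2" where
  "rot i \<theta> = cos \<theta> *\<^sub>R mat 1 + sin \<theta> *\<^sub>R rot_gen i"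

lemma rot_gen_square: "rot_gen i ** rot_gen i = - mat 1"
  by (simp add: rot_gen_def mat2_one)

lemma rot_1: "i = 1 \<Longrightarrow> rot i \<theta> = mat2 (cis \<theta>) 0 0 (cis (- \<theta>))"
  by (simp add: rot_def rot_gen_def mat2_one complex_eq_iff)

lemma rot_2: "i \<noteq> 1 \<Longrightarrow> rot i \<theta> = mat2 (cos \<theta>) (sin \<theta>) (- sin \<theta>) (cos \<theta>)"
  by (simp add: rot_def rot_gen_def mat2_one complex_eq_iff)

lemma gate_eq_rot: "gate \<alpha> i = rot i (pi * \<alpha>)"
proof -
  have "cscale (\<i> * complex_of_real (pi * \<alpha>)) (if i = 1 then pauliZ else pauliY)
          = (pi * \<alpha>) *\<^sub>R rot_gen i"
    by (simp add: cmat2_eq_iff cscale_def pauliZ_def pauliY_def rot_gen_def complex_eq_iff)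
  then have "gate \<alpha> i = mexp ((pi * \<alpha>) *\<^sub>R rot_gen i)"
    unfolding gate_def by (metis (full_types))
  then show ?thesis
    by (simp add: mexp_scaleR_of_square_eq_minus_one rot_gen_square rot_def)
qed

lemma rot_add: "rot i a ** rot i b = rot i (a + b)"
proof (cases "i = 1")
  case True
  then show ?thesis by (simp add: rot_1 cis_mult)
next
  case False
  then show ?thesis
    by (simp add: rot_2 cos_add sin_add algebra_simps flip: of_real_mult of_real_add of_real_minus)
qed

lemma rot_zero [simp]: "rot i 0 = mat 1"
  by (simp add: rot_def)

lemma rot_periodic: "rot i (\<theta> + 2 * pi * of_int k) = rot i \<theta>"
  by (simp add: rot_def cos_add sin_add)

lemma adj_rot: "adj (rot i \<theta>) = rot i (- \<theta>)"
  by (cases "i = 1") (simp_all add: rot_1 rot_2 cis_cnj)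

lemma mpow_rot: "mpow (rot i \<theta>) k = rot i (real k * \<theta>)"
  by (induction k) (simp_all add: rot_add algebra_simps)

lemma minv_eqI:
  assumes "A ** B = mat 1" "B ** A = mat 1"
  shows "minv A = B"
  unfolding minv_def
proof (rule some_equality)
  fix C assume "A ** C = mat 1 \<and> C ** A = mat 1"
  then have "C = (B ** A) ** C" using assms(2) by simp
  also have "\<dots> = B" by (simp add: matrix_mul_assoc[symmetric] \<open>A ** C = mat 1 \<and> C ** A = mat 1\<close>)
  finally show "C = B" .
qed (use assms in simp)

lemma minv_rot: "minv (rot i \<theta>) = rot i (- \<theta>)"
  by (intro minv_eqI) (simp_all add: rot_add)

lemma mzpow_gate: "mzpow (gate \<alpha> i) n = rot i (of_int n * (pi * \<alpha>))"
  by (simp add: mzpow_def gate_eq_rot mpow_rot minv_rot)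

lemma word_prod_Nil [simp]: "word_prod \<alpha> [] = mat 1"
  and word_prod_Cons [simp]:
    "word_prod \<alpha> ((i, n) # ws) = rot i (of_int n * (pi * \<alpha>)) ** word_prod \<alpha> ws"
  by (simp_all add: word_prod_def mzpow_gate)

lemma SU2_mult: "A \<in> SU2 \<Longrightarrow> B \<in> SU2 \<Longrightarrow> A ** B \<in> SU2"
  by (simp add: SU2_def adj_mult_cancel_left det_mul)

lemma rot_SU2: "rot i \<theta> \<in> SU2"
proof -
  have "det (rot i \<theta>) = 1"
    by (cases "i = 1")
      (simp_all add: rot_1 rot_2 cis_mult sin_cos_squared_add3 flip: of_real_mult of_real_add)
  then show ?thesis by (simp add: SU2_def adj_rot rot_add)
qed

lemma word_prod_SU2: "word_prod \<alpha> ws \<in> SU2"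
proof (induction ws)
  case Nil
  show ?case by (simp add: SU2_def mat2_one)
next
  case (Cons w ws)
  then show ?case by (cases w) (simp add: SU2_mult rot_SU2)
qed

lemma norm_cmat2:
  "norm (A :: cmat2) =
     sqrt ((cmod (A$1$1))\<^sup>2 + (cmod (A$1$2))\<^sup>2 + (cmod (A$2$1))\<^sup>2 + (cmod (A$2$2))\<^sup>2)"
  by (simp add: norm_vec_def L2_set_def sum_2 add.assoc)

lemma norm_mat2:
  "norm (mat2 a b c d) = sqrt ((cmod a)\<^sup>2 + (cmod b)\<^sup>2 + (cmod c)\<^sup>2 + (cmod d)\<^sup>2)"
  by (simp add: norm_cmat2)

lemma norm_cmat2_square: "(norm (A :: cmat2))\<^sup>2 = Re (trace (adj A ** A))"
  by (simp add: norm_cmat2 trace_def sum_2 matrix_matrix_mult_def adj_def transpose_def cmod_power2)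
     (simp add: power2_eq_square)

lemma hs_norm_eq_norm: "hs_norm A = norm A"
  by (simp add: hs_norm_def flip: norm_cmat2_square)

lemma norm_mult_SU2_left:
  assumes "U \<in> SU2"
  shows "norm (U ** A) = norm (A :: cmat2)"
proof -
  have "adj (U ** A) ** (U ** A) = adj A ** A"
    using assms by (simp add: SU2_def adj_mult_cancel_left)
  then have "(norm (U ** A))\<^sup>2 = (norm A)\<^sup>2"
    by (simp add: norm_cmat2_square)
  then show ?thesis by simp
qed

lemma norm_mult_SU2_right:
  assumes "U \<in> SU2"
  shows "norm (A ** U) = norm (A :: cmat2)"
proof -
  have "U ** adj U = mat 1"
    using assms matrix_left_right_inverse by (auto simp: SU2_def)
  have "trace (adj (A ** U) ** (A ** U)) = trace (adj U ** (adj A ** A ** U))"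
    by (simp add: adj_mult matrix_mul_assoc)
  also have "\<dots> = trace ((adj A ** A ** U) ** adj U)"
    by (rule trace_mul_sym)
  also have "\<dots> = trace (adj A ** A)"
    using \<open>U ** adj U = mat 1\<close> by (simp flip: matrix_mul_assoc)
  finally have "trace (adj (A ** U) ** (A ** U)) = trace (adj A ** A)" .
  then have "(norm (A ** U))\<^sup>2 = (norm A)\<^sup>2"
    by (simp add: norm_cmat2_square)
  then show ?thesis by simp
qed

lemma norm_mult3_diff_le:
  assumes "A \<in> SU2" "B \<in> SU2" "C \<in> SU2" "A' \<in> SU2" "B' \<in> SU2" "C' \<in> SU2"
  shows "norm (A ** B ** C - A' ** B' ** C') \<le> norm (A - A') + norm (B - B') + norm (C - C')"
proof -
  have "A ** B ** C - A' ** B' ** C'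
          = (A - A') ** (B ** C) + A' ** ((B - B') ** C) + (A' ** B') ** (C - C')"
    by (simp add: cmat2_mult_diff_left cmat2_mult_diff_right matrix_mul_assoc)
  also have "norm \<dots> \<le> norm ((A - A') ** (B ** C)) + norm (A' ** ((B - B') ** C))
                          + norm ((A' ** B') ** (C - C'))"
    by (meson add_right_mono norm_triangle_ineq order_trans)
  also have "\<dots> = norm (A - A') + norm (B - B') + norm (C - C')"
    using assms by (simp add: norm_mult_SU2_left norm_mult_SU2_right SU2_mult)
  finally show ?thesis .
qed

lemma SU2_cases:
  assumes "U \<in> SU2"
  obtains a b where "U = mat2 a b (- cnj b) (cnj a)" "(cmod a)\<^sup>2 + (cmod b)\<^sup>2 = 1"
proof -
  define a b c d where "a = U$1$1" "b = U$1$2" "c = U$2$1" "d = U$2$2"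
  have U: "U = mat2 a b c d" unfolding a_b_c_d_def by (rule mat2_cases)
  have unitary: "adj U ** U = mat 1" and det: "a * d - b * c = 1"
    using assms unfolding SU2_def U by auto
  have "adj U = adj U ** (U ** mat2 d (- b) (- c) a)"
    using det by (simp add: U mat2_one algebra_simps)
  also have "\<dots> = mat2 d (- b) (- c) a"
    by (simp add: matrix_mul_assoc unitary)
  finally have "d = cnj a" "c = - cnj b"
    by (simp_all add: U complex_cnj_cancel_iff)
  moreover have "cnj a * a + cnj c * c = 1"
    using unitary by (simp add: U mat2_one)
  then have "(cmod a)\<^sup>2 + (cmod c)\<^sup>2 = 1"
    unfolding cmod_power2 by (simp add: complex_eq_iff power2_eq_square)
  ultimately show thesis
    using that U by simp
qed

lemma SU2_entry_le_1: "U \<in> SU2 \<Longrightarrow> cmod (U$1$1) \<le> 1"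
proof -
  assume "U \<in> SU2"
  then obtain a b where "U = mat2 a b (- cnj b) (cnj a)" "(cmod a)\<^sup>2 + (cmod b)\<^sup>2 = 1"
    by (rule SU2_cases)
  then have "(cmod a)\<^sup>2 \<le> 1"
    using zero_le_power2[of "cmod b"] by linarith
  then show ?thesis
    using \<open>U = mat2 a b (- cnj b) (cnj a)\<close> by (simp add: abs_square_le_1)
qed

section \<open>Euler angles and density of words\<close>

lemma rot_euler:
  "rot 1 a ** rot 2 b ** rot 1 c =
     mat2 (cis (a + c) * cos b) (cis (a - c) * sin b)
       (- (cis (c - a) * sin b)) (cis (- (a + c)) * cos b)"
  by (simp add: rot_1 rot_2 cis_mult algebra_simps)

lemma SU2_euler_angles:
  assumes "U \<in> SU2"
  obtains a b c where "0 \<le> b" "b \<le> pi / 2" "U = rot 1 a ** rot 2 b ** rot 1 c"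
proof -
  obtain x y where U: "U = mat2 x y (- cnj y) (cnj x)" and xy: "(cmod x)\<^sup>2 + (cmod y)\<^sup>2 = 1"
    using assms by (rule SU2_cases)
  have x1: "cmod x \<le> 1"
    using SU2_entry_le_1[OF assms] by (simp add: U)
  define b where "b = arccos (cmod x)"
  have cos_b: "cos b = cmod x"
    unfolding b_def using x1 norm_ge_zero[of x] by (intro cos_arccos) linarith+
  have sin_b: "sin b = cmod y"
  proof -
    have "sin b = sqrt (1 - (cmod x)\<^sup>2)"
      unfolding b_def using x1 norm_ge_zero[of x] by (intro sin_arccos) linarith+
    also have "1 - (cmod x)\<^sup>2 = (cmod y)\<^sup>2"
      using xy by simp
    finally show ?thesis
      by simp
  qed
  have b: "0 \<le> b" "b \<le> pi / 2"
    unfolding b_def using x1 norm_ge_zero[of x] by (intro arccos_lbound arccos_le_pi2; linarith)+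
  have "rot 1 ((Arg x + Arg y) / 2) ** rot 2 b ** rot 1 ((Arg x - Arg y) / 2)
          = mat2 (cis (Arg x) * cmod x) (cis (Arg y) * cmod y)
              (- (cis (- Arg y) * cmod y)) (cis (- Arg x) * cmod x)"
    unfolding rot_euler by (simp add: cos_b sin_b field_simps)
  also have "\<dots> = U"
    unfolding U by (metis cis_cnj complex_cnj_complex_of_real complex_cnj_mult mult.commute
        rcis_cmod_Arg rcis_def)
  finally show thesis
    using that b by metis
qed

lemma abs_cos_diff_le: "\<bar>cos a - cos b\<bar> \<le> \<bar>a - b :: real\<bar>"
proof -
  have "\<bar>cos a - cos b\<bar> = 2 * \<bar>sin ((a + b) / 2)\<bar> * \<bar>sin ((b - a) / 2)\<bar>"
    by (simp add: cos_diff_cos abs_mult)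
  also have "\<dots> \<le> 2 * 1 * \<bar>(b - a) / 2\<bar>"
    by (intro mult_mono abs_sin_x_le_abs_x) auto
  finally show ?thesis by simp
qed

lemma abs_sin_diff_le: "\<bar>sin a - sin b\<bar> \<le> \<bar>a - b :: real\<bar>"
proof -
  have "\<bar>sin a - sin b\<bar> = 2 * \<bar>sin ((a - b) / 2)\<bar> * \<bar>cos ((a + b) / 2)\<bar>"
    by (simp add: sin_diff_sin abs_mult)
  also have "\<dots> \<le> 2 * \<bar>(a - b) / 2\<bar> * 1"
    by (intro mult_mono abs_sin_x_le_abs_x) auto
  finally show ?thesis by simp
qed

lemma norm_rot_diff_le: "norm (rot i a - rot i b) \<le> 2 * sqrt 2 * \<bar>a - b\<bar>"
proof -
  have norm_one: "norm (mat 1 :: cmat2) = sqrt 2" and norm_gen: "norm (rot_gen i) = sqrt 2"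
    by (simp_all add: mat2_one rot_gen_def norm_mat2)
  have "rot i a - rot i b = (cos a - cos b) *\<^sub>R mat 1 + (sin a - sin b) *\<^sub>R rot_gen i"
    by (simp add: rot_def algebra_simps)
  then have "norm (rot i a - rot i b) \<le> \<bar>cos a - cos b\<bar> * sqrt 2 + \<bar>sin a - sin b\<bar> * sqrt 2"
    using norm_triangle_ineq[of "(cos a - cos b) *\<^sub>R mat 1" "(sin a - sin b) *\<^sub>R rot_gen i"]
    by (simp add: norm_one norm_gen)
  also have "\<dots> \<le> \<bar>a - b\<bar> * sqrt 2 + \<bar>a - b\<bar> * sqrt 2"
    by (intro add_mono mult_right_mono abs_cos_diff_le abs_sin_diff_le) auto
  finally show ?thesis by (simp add: mult_ac)
qed

lemma rot_multiple_approx: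
  assumes "\<alpha> \<notin> \<rat>" "e > 0"
  obtains n :: int where "norm (rot i (of_int n * (pi * \<alpha>)) - rot i \<phi>) < e"
proof -
  have "\<alpha> / 2 \<notin> \<rat>"
    using assms(1) Rats_mult[of 2 "\<alpha> / 2"] by auto
  moreover have "e / (4 * sqrt 2 * pi) > 0"
    using assms(2) by simp
  ultimately obtain h k
    where hk: "\<bar>of_int k * (\<alpha> / 2) - of_int h - \<phi> / (2 * pi)\<bar> < e / (4 * sqrt 2 * pi)"
    by (rule sequence_of_fractional_parts_is_dense)
  define \<phi>' where "\<phi>' = of_int k * (pi * \<alpha>) - 2 * pi * of_int h"
  have "\<phi>' - \<phi> = 2 * pi * (of_int k * (\<alpha> / 2) - of_int h - \<phi> / (2 * pi))"
    unfolding \<phi>'_def by (simp add: field_simps)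
  then have "\<bar>\<phi>' - \<phi>\<bar> = 2 * pi * \<bar>of_int k * (\<alpha> / 2) - of_int h - \<phi> / (2 * pi)\<bar>"
    by (simp add: abs_mult)
  also have "\<dots> < e / (2 * sqrt 2)"
    using hk by (simp add: field_simps)
  finally have close: "2 * sqrt 2 * \<bar>\<phi>' - \<phi>\<bar> < e"
    by (simp add: field_simps)
  have "rot i (of_int k * (pi * \<alpha>)) = rot i \<phi>'"
    using rot_periodic[of i \<phi>' h] by (simp add: \<phi>'_def)
  then show thesis
    using that[of k] norm_rot_diff_le[of i \<phi>' \<phi>] close by simp
qed

lemma SU2_approx_by_word:
  assumes "\<alpha> \<notin> \<rat>" "U \<in> SU2" "\<epsilon> > 0"
  obtains ws where "set ws \<subseteq> {1, 2} \<times> UNIV" "norm (word_prod \<alpha> ws - U) < \<epsilon>"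
proof -
  obtain a b c where U: "U = rot 1 a ** rot 2 b ** rot 1 c"
    using SU2_euler_angles[OF assms(2)] by metis
  have e: "\<epsilon> / 3 > 0" using assms(3) by simp
  obtain n1 n2 n3 :: int where
    n1: "norm (rot 1 (of_int n1 * (pi * \<alpha>)) - rot 1 a) < \<epsilon> / 3" and
    n2: "norm (rot 2 (of_int n2 * (pi * \<alpha>)) - rot 2 b) < \<epsilon> / 3" and
    n3: "norm (rot 1 (of_int n3 * (pi * \<alpha>)) - rot 1 c) < \<epsilon> / 3"
    using rot_multiple_approx[OF assms(1) e] by metis
  let ?ws = "[(1, n1), (2, n2), (1, n3)]"
  have word: "word_prod \<alpha> ?ws = rot 1 (of_int n1 * (pi * \<alpha>)) ** rot 2 (of_int n2 * (pi * \<alpha>))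
                                ** rot 1 (of_int n3 * (pi * \<alpha>))"
    by (simp add: matrix_mul_assoc)
  have "norm (word_prod \<alpha> ?ws - U)
      \<le> norm (rot 1 (of_int n1 * (pi * \<alpha>)) - rot 1 a)
          + norm (rot 2 (of_int n2 * (pi * \<alpha>)) - rot 2 b)
          + norm (rot 1 (of_int n3 * (pi * \<alpha>)) - rot 1 c)"
    unfolding word U by (intro norm_mult3_diff_le rot_SU2)
  then have "norm (word_prod \<alpha> ?ws - U) < \<epsilon>"
    using n1 n2 n3 by linarith
  then show thesis
    using that[of ?ws] by simp
qed

lemma gate_complexity_attained:
  assumes "\<alpha> \<notin> \<rat>" "U \<in> SU2" "\<epsilon> > 0"
  obtains ws where "set ws \<subseteq> {1, 2} \<times> UNIV" "word_cost ws = gate_complexity \<alpha> \<epsilon> U"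
    "norm (word_prod \<alpha> ws - U) < \<epsilon>"
proof -
  obtain ws where "set ws \<subseteq> {1, 2} \<times> UNIV" "norm (word_prod \<alpha> ws - U) < \<epsilon>"
    using SU2_approx_by_word[OF assms] .
  then have "\<exists>c ws. set ws \<subseteq> {1, 2} \<times> UNIV \<and> word_cost ws = c \<and> hs_norm (word_prod \<alpha> ws - U) < \<epsilon>"
    by (auto simp: hs_norm_eq_norm)
  from LeastI_ex[OF this] show thesis
    using that unfolding gate_complexity_def hs_norm_eq_norm by blast
qed

section \<open>Irrationality of the angle\<close>

fun lucas_V :: "int \<Rightarrow> int \<Rightarrow> nat \<Rightarrow> int" where
  "lucas_V P Q 0 = 2"
| "lucas_V P Q (Suc 0) = P"
| "lucas_V P Q (Suc (Suc n)) = P * lucas_V P Q (Suc n) - Q * lucas_V P Q n"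

lemma lucas_V_cos:
  assumes "of_int P = 2 * s * cos y" "of_int Q = s\<^sup>2"
  shows "of_int (lucas_V P Q n) = s ^ n * (2 * cos (real n * y))"
  using assms
proof (induction P Q n rule: lucas_V.induct)
  case (3 P Q n)
  have "of_int (lucas_V P Q (Suc (Suc n)))
          = s ^ Suc (Suc n) * (2 * (2 * cos y * cos (real (Suc n) * y)) - 2 * cos (real n * y))"
    using 3 by (simp add: power2_eq_square algebra_simps)
  also have "2 * cos y * cos (real (Suc n) * y) = cos (real (Suc (Suc n)) * y) + cos (real n * y)"
    using cos_add[of "real (Suc n) * y" y] cos_diff[of "real (Suc n) * y" y]
    by (simp add: algebra_simps)
  finally show ?case
    by simp
qed simp_all

lemma lucas_V_congruent_power: "n \<ge> 1 \<Longrightarrow> Q dvd lucas_V P Q n - P ^ n"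
proof (induction P Q n rule: lucas_V.induct)
  case (3 P Q n)
  have "lucas_V P Q (Suc (Suc n)) - P ^ Suc (Suc n)
          = P * (lucas_V P Q (Suc n) - P ^ Suc n) - Q * lucas_V P Q n"
    by (simp add: algebra_simps)
  moreover have "Q dvd P * (lucas_V P Q (Suc n) - P ^ Suc n)"
    using 3 by simp
  ultimately show ?case
    by (metis dvd_diff dvd_triv_left)
qed simp_all

text \<open>A weak form of Niven's theorem.\<close>
lemma two_cos_Ints_of_periodic:
  assumes "2 * cos y \<in> \<rat>" "N \<ge> 1" "cos (real N * y) = 1"
  shows "2 * cos y \<in> \<int>"
proof -
  obtain m k :: int where k: "k > 0" "coprime m k" "2 * cos y = of_int m / of_int k"
    using Rats_cases'[OF assms(1)] by metis
  have "of_int m = 2 * of_int k * cos y"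
    using k by (simp add: field_simps)
  then have "of_int (lucas_V m (k\<^sup>2) N) = (of_int k :: real) ^ N * 2"
    using lucas_V_cos[of m k y "k\<^sup>2" N] assms(3) by simp
  then have "lucas_V m (k\<^sup>2) N = k ^ N * 2"
    by (metis of_int_eq_iff of_int_mult of_int_numeral of_int_power)
  then have "k dvd lucas_V m (k\<^sup>2) N"
    using assms(2) by (simp add: dvd_power)
  moreover have "k dvd lucas_V m (k\<^sup>2) N - m ^ N"
    using lucas_V_congruent_power[OF assms(2), of "k\<^sup>2" m] dvd_trans[of k "k\<^sup>2"] by simp
  ultimately have "k dvd m ^ N"
    using dvd_diff[of k "lucas_V m (k\<^sup>2) N" "lucas_V m (k\<^sup>2) N - m ^ N"] by simp
  moreover have "coprime k (m ^ N)"
    using k(2) by (simp add: coprime_commute)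
  ultimately have "is_unit k"
    by (metis coprime_absorb_left)
  then have "k = 1"
    using k(1) by simp
  then show ?thesis
    using k by simp
qed

lemma angle_irrational_of_rational_cos:
  assumes "cos (pi * \<alpha>) \<in> \<rat>" "cos (pi * \<alpha>) \<notin> {0, 1, -1, 1/2, -1/2}"
  shows "\<alpha> \<notin> \<rat>"
proof
  assume "\<alpha> \<in> \<rat>"
  then obtain a b :: int where b: "b > 0" "\<alpha> = of_int a / of_int b"
    using Rats_cases' by metis
  have "real (nat (2 * b)) * (pi * \<alpha>) = 2 * pi * of_int a"
    using b by (simp add: field_simps)
  then have "cos (real (nat (2 * b)) * (pi * \<alpha>)) = 1"
    by (metis cos_int_2pin)
  then have "2 * cos (pi * \<alpha>) \<in> \<int>"
    using assms(1) b by (intro two_cos_Ints_of_periodic[of _ "nat (2 * b)"]) auto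
  then obtain z where z: "2 * cos (pi * \<alpha>) = of_int z"
    by (elim Ints_cases)
  have "\<bar>of_int z :: real\<bar> \<le> 2"
    using abs_cos_le_one[of "pi * \<alpha>"] by (simp add: abs_mult flip: z)
  then have "z \<in> {-2, -1, 0, 1, 2}"
    by auto
  then show False
    using z assms(2) by auto
qed

section \<open>Galois conjugates of words\<close>

definition gaussian_ints :: "complex set" where
  "gaussian_ints = {z. Re z \<in> \<int> \<and> Im z \<in> \<int>}"

definition gaussian_matrix :: "cmat2 \<Rightarrow> bool" where
  "gaussian_matrix A \<longleftrightarrow> (\<forall>i j. A $ i $ j \<in> gaussian_ints)"

lemma gaussian_matrix_add: "gaussian_matrix A \<Longrightarrow> gaussian_matrix B \<Longrightarrow> gaussian_matrix (A + B)"
  and gaussian_matrix_uminus: "gaussian_matrix A \<Longrightarrow> gaussian_matrix (- A)"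
  and gaussian_matrix_scaleR: "x \<in> \<int> \<Longrightarrow> gaussian_matrix A \<Longrightarrow> gaussian_matrix (x *\<^sub>R A)"
  by (simp_all add: gaussian_matrix_def gaussian_ints_def)

lemma gaussian_matrix_mult: "gaussian_matrix A \<Longrightarrow> gaussian_matrix B \<Longrightarrow> gaussian_matrix (A ** B)"
  by (simp add: gaussian_matrix_def gaussian_ints_def matrix_matrix_mult_def sum_2)

lemma gaussian_matrix_one: "gaussian_matrix (mat 1)"
  and gaussian_matrix_zero: "gaussian_matrix 0"
  and gaussian_matrix_rot_gen: "gaussian_matrix (rot_gen i)"
  by (auto simp: gaussian_matrix_def gaussian_ints_def mat2_one rot_gen_def forall_2)

text \<open>\<open>A\<close> and \<open>B\<close> have entries in \<open>q\<^sup>-\<^sup>n \<int>[i][r]\<close> and are exchanged by the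
  conjugation \<open>r \<mapsto> -r\<close>.\<close>
definition conjugate_pair :: "real \<Rightarrow> real \<Rightarrow> nat \<Rightarrow> cmat2 \<Rightarrow> cmat2 \<Rightarrow> bool" where
  "conjugate_pair q r n A B \<longleftrightarrow> (\<exists>P Q. gaussian_matrix P \<and> gaussian_matrix Q \<and>
     A = (1 / q ^ n) *\<^sub>R (P + r *\<^sub>R Q) \<and> B = (1 / q ^ n) *\<^sub>R (P - r *\<^sub>R Q))"

lemma conjugate_pair_one: "conjugate_pair q r 0 (mat 1) (mat 1)"
  unfolding conjugate_pair_def
  by (intro exI[of _ "mat 1"] exI[of _ 0]) (simp add: gaussian_matrix_one gaussian_matrix_zero)

lemma conjugate_pair_swap:
  assumes "conjugate_pair q r n A B"
  shows "conjugate_pair q r n B A"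
proof -
  obtain P Q where "gaussian_matrix P" "gaussian_matrix Q"
    "A = (1 / q ^ n) *\<^sub>R (P + r *\<^sub>R Q)" "B = (1 / q ^ n) *\<^sub>R (P - r *\<^sub>R Q)"
    using assms unfolding conjugate_pair_def by blast
  then show ?thesis
    unfolding conjugate_pair_def
    by (intro exI[of _ P] exI[of _ "- Q"]) (simp add: gaussian_matrix_uminus)
qed

lemma scaleR_mult_scaleR_expand:
  fixes P1 Q1 P2 Q2 :: cmat2
  shows "(s *\<^sub>R (P1 + r *\<^sub>R Q1)) ** (t *\<^sub>R (P2 + r *\<^sub>R Q2)) =
     (s * t) *\<^sub>R ((P1 ** P2 + r\<^sup>2 *\<^sub>R (Q1 ** Q2)) + r *\<^sub>R (P1 ** Q2 + Q1 ** P2))"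
  by (simp add: matrix_add_ldistrib cmat2_mult_add_left matrix_scalar_ac scalar_matrix_assoc
      power2_eq_square scaleR_add_right mult_ac add_ac)

lemma conjugate_pair_mult:
  assumes "r\<^sup>2 \<in> \<int>" "conjugate_pair q r m A B" "conjugate_pair q r n C D"
  shows "conjugate_pair q r (m + n) (A ** C) (B ** D)"
proof -
  obtain P1 Q1 where 1: "gaussian_matrix P1" "gaussian_matrix Q1"
      "A = (1 / q ^ m) *\<^sub>R (P1 + r *\<^sub>R Q1)" "B = (1 / q ^ m) *\<^sub>R (P1 + (- r) *\<^sub>R Q1)"
    using assms(2) unfolding conjugate_pair_def by auto
  obtain P2 Q2 where 2: "gaussian_matrix P2" "gaussian_matrix Q2"
      "C = (1 / q ^ n) *\<^sub>R (P2 + r *\<^sub>R Q2)" "D = (1 / q ^ n) *\<^sub>R (P2 + (- r) *\<^sub>R Q2)"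
    using assms(3) unfolding conjugate_pair_def by auto
  show ?thesis
    unfolding conjugate_pair_def
  proof (intro exI conjI)
    show "gaussian_matrix (P1 ** P2 + r\<^sup>2 *\<^sub>R (Q1 ** Q2))" "gaussian_matrix (P1 ** Q2 + Q1 ** P2)"
      using 1 2 assms(1)
      by (simp_all add: gaussian_matrix_add gaussian_matrix_mult gaussian_matrix_scaleR)
    show "A ** C = (1 / q ^ (m + n)) *\<^sub>R
            ((P1 ** P2 + r\<^sup>2 *\<^sub>R (Q1 ** Q2)) + r *\<^sub>R (P1 ** Q2 + Q1 ** P2))"
      "B ** D = (1 / q ^ (m + n)) *\<^sub>R
            ((P1 ** P2 + r\<^sup>2 *\<^sub>R (Q1 ** Q2)) - r *\<^sub>R (P1 ** Q2 + Q1 ** P2))"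
      unfolding 1 2 scaleR_mult_scaleR_expand by (simp_all add: power_add)
  qed
qed

lemma conjugate_pair_rot:
  assumes "cos \<theta> = of_int p / q" "sin \<theta> = r / q" "q \<noteq> 0"
  shows "conjugate_pair q r 1 (rot i \<theta>) (rot i (- \<theta>))"
  unfolding conjugate_pair_def
proof (intro exI conjI)
  show "gaussian_matrix (of_int p *\<^sub>R mat 1)" "gaussian_matrix (rot_gen i)"
    by (simp_all add: gaussian_matrix_scaleR gaussian_matrix_one gaussian_matrix_rot_gen)
  show "rot i \<theta> = (1 / q ^ 1) *\<^sub>R (of_int p *\<^sub>R mat 1 + r *\<^sub>R rot_gen i)"
    "rot i (- \<theta>) = (1 / q ^ 1) *\<^sub>R (of_int p *\<^sub>R mat 1 - r *\<^sub>R rot_gen i)"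
    using assms by (simp_all add: rot_def scaleR_add_right scaleR_diff_right)
qed

lemma conjugate_pair_rot_multiple:
  assumes "r\<^sup>2 \<in> \<int>" "cos \<theta> = of_int p / q" "sin \<theta> = r / q" "q \<noteq> 0"
  shows "conjugate_pair q r (nat \<bar>n\<bar>) (rot i (of_int n * \<theta>)) (rot i (- (of_int n * \<theta>)))"
proof -
  have nat_case: "conjugate_pair q r k (rot i (real k * \<theta>)) (rot i (- (real k * \<theta>)))" for k
  proof (induction k)
    case 0
    show ?case by (simp add: conjugate_pair_one)
  next
    case (Suc k)
    have "conjugate_pair q r (1 + k)
            (rot i \<theta> ** rot i (real k * \<theta>)) (rot i (- \<theta>) ** rot i (- (real k * \<theta>)))"
      using conjugate_pair_mult[OF assms(1) conjugate_pair_rot[OF assms(2-4)] Suc] .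
    then show ?case
      by (simp add: rot_add algebra_simps)
  qed
  show ?thesis
  proof (cases "n \<ge> 0")
    case True
    then show ?thesis using nat_case[of "nat n"] by simp
  next
    case False
    then show ?thesis using conjugate_pair_swap[OF nat_case[of "nat (- n)"]] by simp
  qed
qed

lemma scaled_sin_square_Ints:
  assumes "cos \<theta> = of_int p / real q" "q > 0"
  shows "(q * sin \<theta>)\<^sup>2 \<in> \<int>"
proof -
  have "of_int p = q * cos \<theta>"
    using assms by (simp add: field_simps)
  then have "(q * sin \<theta>)\<^sup>2 = q\<^sup>2 - p\<^sup>2"
    by (simp add: power_mult_distrib sin_squared_eq algebra_simps)
  then show ?thesis
    by simp
qed

lemma conjugate_pair_word:
  assumes "cos (pi * \<alpha>) = of_int p / real q" "q > 0"
  shows "conjugate_pair q (q * sin (pi * \<alpha>)) (word_cost ws) (word_prod \<alpha> ws) (word_prod (- \<alpha>) ws)"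
proof -
  define r where "r = q * sin (pi * \<alpha>)"
  have r: "r\<^sup>2 \<in> \<int>"
    unfolding r_def using assms by (rule scaled_sin_square_Ints)
  have sin: "sin (pi * \<alpha>) = r / q"
    using assms by (simp add: r_def)
  have "conjugate_pair q r (word_cost ws) (word_prod \<alpha> ws) (word_prod (- \<alpha>) ws)"
  proof (induction ws)
    case Nil
    show ?case by (simp add: word_cost_def conjugate_pair_one)
  next
    case (Cons w ws)
    obtain i n where w: "w = (i, n)" by fastforce
    have "conjugate_pair q r (nat \<bar>n\<bar> + word_cost ws)
            (rot i (of_int n * (pi * \<alpha>)) ** word_prod \<alpha> ws)
            (rot i (- (of_int n * (pi * \<alpha>))) ** word_prod (- \<alpha>) ws)"
      using assms by (intro conjugate_pair_mult r conjugate_pair_rot_multiple sin Cons) auto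
    then show ?case
      by (simp add: w word_cost_def)
  qed
  then show ?thesis
    by (simp add: r_def)
qed

section \<open>A Diophantine gap\<close>

lemma Ints_of_Rats_square_Ints:
  fixes r :: real
  assumes "r \<in> \<rat>" "r\<^sup>2 \<in> \<int>"
  shows "r \<in> \<int>"
proof -
  obtain R where R: "r\<^sup>2 = of_int R"
    using assms(2) by (elim Ints_cases)
  have "algebraic_int r"
  proof
    show "lead_coeff [:- of_int R, 0, 1:] = 1" "\<forall>i. coeff [:- of_int R, 0, 1:] i \<in> \<int>"
      by (simp_all add: coeff_pCons split: nat.split)
    show "poly [:- of_int R, 0, 1:] r = 0"
      using R by (simp add: power2_eq_square)
  qed
  then show ?thesis
    using assms(1) by (rule rational_algebraic_int_is_int)
qed

lemma Ints_of_Rats_add_mult_sqrt: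
  fixes r a b :: real
  assumes "r\<^sup>2 \<in> \<int>" "a \<in> \<int>" "b \<in> \<int>" "a + r * b \<in> \<rat>"
  shows "a + r * b \<in> \<int>"
proof (cases "b = 0")
  case False
  have "r = (a + r * b - a) / b"
    using False by simp
  also have "\<dots> \<in> \<rat>"
    using assms(2-4) Ints_subset_Rats by (intro Rats_divide Rats_diff) auto
  finally have "r \<in> \<int>"
    using assms(1) by (rule Ints_of_Rats_square_Ints)
  then show ?thesis
    using assms(2,3) by simp
qed (use assms in simp)

text \<open>The norm \<open>(x - T) (x' - T)\<close> of \<open>x - T\<close>, where \<open>x'\<close> is the conjugate of \<open>x = a + r b\<close>,
  lies in \<open>v\<^sup>-\<^sup>2 \<int>\<close> and is nonzero, so \<open>x\<close> is far from \<open>T\<close> unless \<open>x'\<close> is far from \<open>T\<close>.\<close>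
lemma conjugate_gap:
  fixes r a b T K :: real and v :: nat
  assumes "r\<^sup>2 \<in> \<int>" "a \<in> \<int>" "b \<in> \<int>" "T \<notin> \<int>" "of_nat v * T \<in> \<int>" "v > 0"
    and "\<bar>a - r * b - T\<bar> \<le> K"
  shows "1 \<le> (real v)\<^sup>2 * K * \<bar>a + r * b - T\<bar>"
proof -
  have "T \<in> \<rat>"
    using assms(5,6) Rats_divide[of "of_nat v * T" "of_nat v"] Ints_subset_Rats by auto
  have ne: "a + s * b \<noteq> T" if "s\<^sup>2 = r\<^sup>2" for s
    using Ints_of_Rats_add_mult_sqrt[of s a b] that assms(1-4) \<open>T \<in> \<rat>\<close> by auto
  define N where "N = (real v * (a + r * b - T)) * (real v * (a - r * b - T))"
  have "N = (real v * a - real v * T)\<^sup>2 - (real v)\<^sup>2 * b\<^sup>2 * r\<^sup>2"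
    unfolding N_def by (simp add: power2_eq_square algebra_simps)
  then have "N \<in> \<int>"
    using assms(1-3,5) by simp
  moreover have "N \<noteq> 0"
    unfolding N_def using ne[of r] ne[of "- r"] assms(6) by auto
  ultimately have "1 \<le> \<bar>N\<bar>"
    by (rule Ints_nonzero_abs_ge1)
  also have "\<bar>N\<bar> = (real v)\<^sup>2 * \<bar>a + r * b - T\<bar> * \<bar>a - r * b - T\<bar>"
    unfolding N_def by (simp add: abs_mult power2_eq_square)
  also have "\<dots> \<le> (real v)\<^sup>2 * \<bar>a + r * b - T\<bar> * K"
    using assms(7) by (intro mult_left_mono) auto
  finally show ?thesis
    by (simp add: mult_ac)
qed

lemma cmod_add_mult_square:
  assumes "s\<^sup>2 = r\<^sup>2"
  shows "(cmod (z + s *\<^sub>R y))\<^sup>2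
           = ((cmod z)\<^sup>2 + r\<^sup>2 * (cmod y)\<^sup>2) + s * (2 * (Re z * Re y + Im z * Im y))"
proof -
  have "(cmod (z + s *\<^sub>R y))\<^sup>2
          = ((cmod z)\<^sup>2 + s\<^sup>2 * (cmod y)\<^sup>2) + s * (2 * (Re z * Re y + Im z * Im y))"
    unfolding cmod_power2 by (simp add: power2_eq_square algebra_simps)
  then show ?thesis
    using assms by simp
qed

lemma word_prod_entry_gap:
  assumes cos: "cos (pi * \<alpha>) = of_int p / real q" "q > 0"
    and t: "0 \<le> t" "t \<le> 1" "of_nat v * t \<in> \<int>" "v > 0" "\<And>n. t * real q ^ n \<notin> \<int>"
  shows "1 \<le> (real v)\<^sup>2 * real q ^ (4 * word_cost ws) * \<bar>(cmod (word_prod \<alpha> ws $ 1 $ 1))\<^sup>2 - t\<bar>"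
proof -
  define N r K where "N = word_cost ws" "r = q * sin (pi * \<alpha>)" "K = real q ^ (2 * N)"
  obtain P Q where PQ: "gaussian_matrix P" "gaussian_matrix Q"
    "word_prod \<alpha> ws = (1 / q ^ N) *\<^sub>R (P + r *\<^sub>R Q)"
    "word_prod (- \<alpha>) ws = (1 / q ^ N) *\<^sub>R (P + (- r) *\<^sub>R Q)"
    using conjugate_pair_word[OF cos, of ws] unfolding conjugate_pair_def N_r_K_def by auto
  define z y where "z = P $ 1 $ 1" "y = Q $ 1 $ 1"
  define a b where "a = (cmod z)\<^sup>2 + r\<^sup>2 * (cmod y)\<^sup>2" "b = 2 * (Re z * Re y + Im z * Im y)"
  have r: "r\<^sup>2 \<in> \<int>"
    unfolding N_r_K_def using cos by (rule scaled_sin_square_Ints)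
  have "z \<in> gaussian_ints" "y \<in> gaussian_ints"
    using PQ(1,2) by (simp_all add: gaussian_matrix_def z_y_def)
  then have ab: "a \<in> \<int>" "b \<in> \<int>"
    using r by (simp_all add: a_b_def gaussian_ints_def cmod_power2)
  have K: "K > 0" "(real q ^ N)\<^sup>2 = K"
    using cos(2) by (simp_all add: N_r_K_def power_even_eq)
  have entry: "(cmod (word_prod \<beta> ws $ 1 $ 1))\<^sup>2 = (a + s * b) / K"
    if "word_prod \<beta> ws = (1 / q ^ N) *\<^sub>R (P + s *\<^sub>R Q)" "s\<^sup>2 = r\<^sup>2" for \<beta> s
    using that K by (simp add: z_y_def a_b_def cmod_add_mult_square power_divide flip: z_y_def)
  have conj_entry: "(cmod (word_prod (- \<alpha>) ws $ 1 $ 1))\<^sup>2 = (a - r * b) / K"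
    using entry[OF PQ(4)] by simp
  have "(a - r * b) / K \<le> 1"
    using SU2_entry_le_1[OF word_prod_SU2, of "- \<alpha>" ws] unfolding conj_entry[symmetric]
    by (metis norm_ge_zero power_le_one)
  moreover have "0 \<le> (a - r * b) / K"
    unfolding conj_entry[symmetric] by simp
  ultimately have "0 \<le> a - r * b" "a - r * b \<le> K"
    using K by (simp_all add: field_simps)
  moreover have "0 \<le> t * K" "t * K \<le> K"
    using K t(1,2) by (simp_all add: mult_left_le_one_le)
  ultimately have "\<bar>a - r * b - t * K\<bar> \<le> K"
    by (simp only: abs_le_iff) linarith
  moreover have "t * K \<notin> \<int>" "of_nat v * (t * K) \<in> \<int>"
    using t(3,5) by (simp_all add: N_r_K_def mult.assoc[symmetric])
  ultimately have "1 \<le> (real v)\<^sup>2 * K * \<bar>a + r * b - t * K\<bar>"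
    using conjugate_gap[OF r ab] t(4) by blast
  also have "a + r * b - t * K = K * ((cmod (word_prod \<alpha> ws $ 1 $ 1))\<^sup>2 - t)"
    using entry[OF PQ(3)] K by (simp add: field_simps)
  also have "\<bar>K * ((cmod (word_prod \<alpha> ws $ 1 $ 1))\<^sup>2 - t)\<bar>
               = K * \<bar>(cmod (word_prod \<alpha> ws $ 1 $ 1))\<^sup>2 - t\<bar>"
    using K by (simp add: abs_mult)
  also have "(real v)\<^sup>2 * K * (K * \<bar>(cmod (word_prod \<alpha> ws $ 1 $ 1))\<^sup>2 - t\<bar>)
               = (real v)\<^sup>2 * real q ^ (4 * N) * \<bar>(cmod (word_prod \<alpha> ws $ 1 $ 1))\<^sup>2 - t\<bar>"
    by (simp add: N_r_K_def mult_ac flip: power_add)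
  finally show ?thesis
    by (simp add: N_r_K_def)
qed

lemma exists_fraction_not_dvd:
  fixes m :: nat and a b :: real
  assumes "m \<ge> 2" "a < b"
  obtains u :: int and j :: nat
  where "j \<ge> 1" "\<not> int m dvd u" "a < of_int u / real m ^ j" "of_int u / real m ^ j < b"
proof -
  obtain j0 where j0: "2 / (b - a) < real m ^ j0"
    using real_arch_pow[of "real m" "2 / (b - a)"] assms(1) by auto
  define M where "M = real m ^ Suc j0"
  have "M > 0"
    using assms(1) by (simp add: M_def)
  have "2 < (b - a) * real m ^ j0"
    using j0 assms(2) by (simp add: field_simps)
  also have "\<dots> \<le> (b - a) * M"
    using assms by (intro mult_left_mono) (simp_all add: M_def)
  finally have M: "M > 0" "2 < (b - a) * M"
    using \<open>M > 0\<close> by simp_all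
  define k where "k = \<lfloor>a * M\<rfloor> + 1"
  have between: "a < of_int u / M \<and> of_int u / M < b" if "u \<in> {k, k + 1}" for u
    using that M unfolding k_def by (auto simp: field_simps) linarith+
  have "\<not> (int m dvd k \<and> int m dvd (k + 1))"
  proof
    assume "int m dvd k \<and> int m dvd (k + 1)"
    then have "int m dvd 1"
      using dvd_add_right_iff by blast
    then show False
      using assms(1) by simp
  qed
  then show thesis
    using that[of "Suc j0"] between unfolding M_def by auto
qed

lemma fraction_mult_power_notin_Ints:
  fixes m q :: nat and u :: int
  assumes "m > 0" "coprime m q" "\<not> int m dvd u" "j \<ge> 1"
  shows "of_int u / real m ^ j * real q ^ n \<notin> \<int>"
proof
  assume "of_int u / real m ^ j * real q ^ n \<in> \<int>"
  then obtain z where "of_int u / real m ^ j * real q ^ n = of_int z"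
    by (elim Ints_cases)
  then have "of_int (u * int q ^ n) = (of_int (z * int m ^ j) :: real)"
    using assms(1) by (simp add: field_simps)
  then have "u * int q ^ n = z * int m ^ j"
    by (simp only: of_int_eq_iff)
  moreover have "int m dvd z * int m ^ j"
    using assms(4) by (simp add: dvd_power)
  ultimately have "int m dvd u * int q ^ n"
    by simp
  moreover have "coprime (int m) (int q ^ n)"
    using assms(2) by simp
  ultimately show False
    using assms(3) by (simp add: coprime_dvd_mult_left_iff)
qed

lemma exists_angle_cos_square_fraction:
  fixes m :: nat
  assumes "0 \<le> \<psi>" "\<psi> \<le> pi / 2" "e > 0" "m \<ge> 2"
  obtains \<psi>' u j where "\<bar>\<psi>' - \<psi>\<bar> < e" "j \<ge> 1" "\<not> int m dvd u"
    "(cos \<psi>')\<^sup>2 = of_int u / real m ^ j"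
proof -
  define d where "d = min (e / 2) (pi / 8)"
  have d: "0 < d" "d < e" "d \<le> pi / 8"
    using assms(3) by (auto simp: d_def min_def)
  obtain lo hi where lh: "0 \<le> lo" "lo < hi" "hi \<le> pi / 2" "\<psi> - d \<le> lo" "hi \<le> \<psi> + d"
  proof (cases "\<psi> \<le> pi / 4")
    case True
    then show ?thesis using that[of \<psi> "\<psi> + d"] d assms(1) by auto
  next
    case False
    then show ?thesis using that[of "\<psi> - d" \<psi>] d assms(2) by auto
  qed
  have "cos hi < cos lo" "0 \<le> cos hi"
    using lh by (auto intro!: cos_monotone_0_pi cos_ge_zero)
  then have "(cos hi)\<^sup>2 < (cos lo)\<^sup>2"
    by (simp add: power_strict_mono)
  then obtain u j where uj: "j \<ge> 1" "\<not> int m dvd u"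
      "(cos hi)\<^sup>2 < of_int u / real m ^ j" "of_int u / real m ^ j < (cos lo)\<^sup>2"
    using exists_fraction_not_dvd[OF assms(4)] by metis
  have "\<exists>x. lo \<le> x \<and> x \<le> hi \<and> (cos x)\<^sup>2 = of_int u / real m ^ j"
    using uj(3,4) lh(2) by (intro IVT2) (auto intro!: continuous_intros)
  then obtain \<psi>' where "lo \<le> \<psi>'" "\<psi>' \<le> hi" "(cos \<psi>')\<^sup>2 = of_int u / real m ^ j"
    by blast
  moreover have "\<bar>\<psi>' - \<psi>\<bar> < e"
    using calculation lh d by linarith
  ultimately show thesis
    using that uj by blast
qed

lemma SU2_perturb_fraction_entry:
  fixes m :: nat
  assumes "U \<in> SU2" "\<delta> > 0" "m \<ge> 2"
  obtains U' u j where "U' \<in> SU2" "norm (U' - U) < \<delta>" "j \<ge> 1" "\<not> int m dvd u"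
    "(cmod (U' $ 1 $ 1))\<^sup>2 = of_int u / real m ^ j"
proof -
  obtain a \<psi> c where \<psi>: "0 \<le> \<psi>" "\<psi> \<le> pi / 2" and U: "U = rot 1 a ** rot 2 \<psi> ** rot 1 c"
    using SU2_euler_angles[OF assms(1)] by metis
  have "\<delta> / (2 * sqrt 2) > 0"
    using assms(2) by simp
  then obtain \<psi>' u j where \<psi>': "\<bar>\<psi>' - \<psi>\<bar> < \<delta> / (2 * sqrt 2)" and uj: "j \<ge> 1" "\<not> int m dvd u"
      "(cos \<psi>')\<^sup>2 = of_int u / real m ^ j"
    using exists_angle_cos_square_fraction[OF \<psi> _ assms(3)] by blast
  define U' where "U' = rot 1 a ** rot 2 \<psi>' ** rot 1 c"
  have "norm (U' - U)
          \<le> norm (rot 1 a - rot 1 a) + norm (rot 2 \<psi>' - rot 2 \<psi>) + norm (rot 1 c - rot 1 c)"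
    unfolding U'_def U by (intro norm_mult3_diff_le rot_SU2)
  also have "\<dots> \<le> 2 * sqrt 2 * \<bar>\<psi>' - \<psi>\<bar>"
    using norm_rot_diff_le[of 2 \<psi>' \<psi>] by simp
  also have "\<dots> < \<delta>"
    using \<psi>' by (simp add: field_simps)
  finally have "norm (U' - U) < \<delta>" .
  moreover have "(cmod (U' $ 1 $ 1))\<^sup>2 = of_int u / real m ^ j"
    using uj(3) unfolding U'_def rot_euler by (simp add: norm_mult)
  moreover have "U' \<in> SU2"
    by (simp add: U'_def SU2_mult rot_SU2)
  ultimately show thesis
    using that uj(1,2) by blast
qed

lemma SU2_perturb_entry_coprime_denominator:
  assumes "U \<in> SU2" "\<delta> > 0" "q > 0"
  obtains U' v where "U' \<in> SU2" "norm (U' - U) < \<delta>" "v > 0"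
    "of_nat v * (cmod (U' $ 1 $ 1))\<^sup>2 \<in> \<int>" "\<And>n. (cmod (U' $ 1 $ 1))\<^sup>2 * real q ^ n \<notin> \<int>"
proof -
  have "q + 1 \<ge> 2"
    using assms(3) by simp
  then obtain U' u j where U': "U' \<in> SU2" "norm (U' - U) < \<delta>"
    and uj: "j \<ge> 1" "\<not> int (q + 1) dvd u" "(cmod (U' $ 1 $ 1))\<^sup>2 = of_int u / real (q + 1) ^ j"
    using SU2_perturb_fraction_entry[OF assms(1,2)] by blast
  show thesis
  proof (rule that[OF U', of "(q + 1) ^ j"])
    show "of_nat ((q + 1) ^ j) * (cmod (U' $ 1 $ 1))\<^sup>2 \<in> \<int>"
      by (simp add: uj(3))
    show "(cmod (U' $ 1 $ 1))\<^sup>2 * real q ^ n \<notin> \<int>" for n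
      unfolding uj(3) using uj(1,2) by (intro fraction_mult_power_notin_Ints) auto
  qed simp
qed

lemma gate_complexity_lower_bound:
  assumes "\<alpha> \<notin> \<rat>" "cos (pi * \<alpha>) = of_int p / real q" "q > 0" "U \<in> SU2"
    and "of_nat v * (cmod (U $ 1 $ 1))\<^sup>2 \<in> \<int>" "v > 0" "\<And>n. (cmod (U $ 1 $ 1))\<^sup>2 * real q ^ n \<notin> \<int>"
    and "\<epsilon> > 0"
  shows "1 < 2 * (real v)\<^sup>2 * (real q ^ 4) ^ gate_complexity \<alpha> \<epsilon> U * \<epsilon>"
proof -
  obtain ws where ws: "word_cost ws = gate_complexity \<alpha> \<epsilon> U" "norm (word_prod \<alpha> ws - U) < \<epsilon>"
    using gate_complexity_attained[OF assms(1,4,8)] by metis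
  define x y t where "x = cmod (word_prod \<alpha> ws $ 1 $ 1)" "y = cmod (U $ 1 $ 1)" "t = y\<^sup>2"
  have xy: "0 \<le> x" "x \<le> 1" "0 \<le> y" "y \<le> 1"
    using SU2_entry_le_1[OF word_prod_SU2] SU2_entry_le_1[OF assms(4)] by (simp_all add: x_y_t_def)
  have "\<bar>x\<^sup>2 - y\<^sup>2\<bar> = \<bar>x - y\<bar> * (x + y)"
  proof -
    have "x\<^sup>2 - y\<^sup>2 = (x - y) * (x + y)"
      by (simp add: power2_eq_square algebra_simps)
    then show ?thesis
      using xy by (simp add: abs_mult)
  qed
  also have "\<dots> \<le> 2 * \<bar>x - y\<bar>"
    using xy by (simp add: mult.commute mult_right_mono)
  also have "\<bar>x - y\<bar> \<le> cmod ((word_prod \<alpha> ws - U) $ 1 $ 1)"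
    unfolding x_y_t_def using norm_triangle_ineq3 by simp
  also have "\<dots> \<le> norm (word_prod \<alpha> ws - U)"
    using Finite_Cartesian_Product.norm_nth_le[of "(word_prod \<alpha> ws - U) $ 1" 1]
      Finite_Cartesian_Product.norm_nth_le[of "word_prod \<alpha> ws - U" 1]
    by linarith
  finally have "\<bar>x\<^sup>2 - t\<bar> < 2 * \<epsilon>"
    using ws(2) by (simp add: x_y_t_def)
  have "0 \<le> t" "t \<le> 1"
    using xy(3,4) unfolding x_y_t_def by (auto intro: power_le_one)
  then have "1 \<le> (real v)\<^sup>2 * real q ^ (4 * word_cost ws) * \<bar>x\<^sup>2 - t\<bar>"
    unfolding x_y_t_def using assms(2,3,5-7) by (intro word_prod_entry_gap) auto
  also have "\<dots> < (real v)\<^sup>2 * real q ^ (4 * word_cost ws) * (2 * \<epsilon>)"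
    using \<open>\<bar>x\<^sup>2 - t\<bar> < 2 * \<epsilon>\<close> assms(3,6) by (intro mult_strict_left_mono) auto
  finally show ?thesis
    using ws(1) by (simp add: mult_ac flip: power_mult)
qed

lemma ln_bound_of_exponential_bound:
  fixes D c \<epsilon> :: real
  assumes "D > 1" "c > 0" "\<epsilon> > 0" "1 < c * D ^ N * \<epsilon>"
  shows "ln (1 / \<epsilon>) / ln D - ln c / ln D < real N"
proof -
  have "1 / \<epsilon> < c * D ^ N"
    using assms(3,4) by (simp add: field_simps)
  then have "ln (1 / \<epsilon>) < ln (c * D ^ N)"
    using assms(1-3) by simp
  also have "\<dots> = ln c + real N * ln D"
    using assms(1,2) by (simp add: ln_mult ln_realpow)
  finally show ?thesis
    using assms(1) by (simp add: field_simps)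
qed

lemma rational_cos_denominator:
  assumes "cos \<theta> \<in> \<rat>" "cos \<theta> \<notin> {-1, 0, 1}"
  obtains p :: int and q :: nat where "q \<ge> 2" "cos \<theta> = of_int p / real q"
proof -
  obtain p b :: int where b: "b > 0" "cos \<theta> = of_int p / of_int b"
    using Rats_cases'[OF assms(1)] by metis
  have "b \<noteq> 1"
  proof
    assume "b = 1"
    then have "\<bar>of_int p :: real\<bar> \<le> 1"
      using b abs_cos_le_one[of \<theta>] by simp
    then have "p \<in> {-1, 0, 1}"
      by auto
    then show False
      using \<open>b = 1\<close> b assms(2) by auto
  qed
  then show thesis
    using that[of "nat b" p] b by simp
qed

theorem proposition3:
  fixes \<alpha> :: real
  assumes "cos (pi * \<alpha>) \<in> \<rat>"
    and "cos (pi * \<alpha>) \<notin> {0, 1, -1, 1/2, -1/2}"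
  shows "\<forall>U \<in> SU2. \<forall>\<delta> > 0. \<exists>U' \<in> SU2. hs_norm (U' - U) < \<delta> \<and>
           (\<exists>D > 1. \<exists>c :: real. \<forall>\<^sub>F \<epsilon> in at_right 0.
              real (gate_complexity \<alpha> \<epsilon> U') > ln (1 / \<epsilon>) / ln D + c)"
proof (intro ballI allI impI)
  fix U :: cmat2 and \<delta> :: real
  assume U: "U \<in> SU2" and \<delta>: "\<delta> > 0"
  have irrational: "\<alpha> \<notin> \<rat>"
    using assms by (rule angle_irrational_of_rational_cos)
  obtain p q where q: "q \<ge> 2" and cos_eq: "cos (pi * \<alpha>) = of_int p / real q"
    using rational_cos_denominator[OF assms(1)] assms(2) by blast
  then obtain U' v where U': "U' \<in> SU2" "norm (U' - U) < \<delta>"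
    and v: "v > 0" "of_nat v * (cmod (U' $ 1 $ 1))\<^sup>2 \<in> \<int>"
      "\<And>n. (cmod (U' $ 1 $ 1))\<^sup>2 * real q ^ n \<notin> \<int>"
    using SU2_perturb_entry_coprime_denominator[OF U \<delta>, of q] by auto
  define D c where "D = real q ^ 4" "c = - ln (2 * (real v)\<^sup>2) / ln D"
  have "D > 1"
    using q by (simp add: D_c_def)
  have bound: "ln (1 / \<epsilon>) / ln D + c < real (gate_complexity \<alpha> \<epsilon> U')" if "\<epsilon> > 0" for \<epsilon>
    using ln_bound_of_exponential_bound[OF \<open>D > 1\<close> _ that]
      gate_complexity_lower_bound[OF irrational cos_eq _ U'(1) v(2,1,3) that] q v(1)
    by (simp add: D_c_def mult.assoc)
  have "\<forall>\<^sub>F \<epsilon> in at_right 0. real (gate_complexity \<alpha> \<epsilon> U') > ln (1 / \<epsilon>) / ln D + c"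
    using eventually_at_right_less[of "0 :: real"] by (rule eventually_mono) (rule bound)
  then show "\<exists>U' \<in> SU2. hs_norm (U' - U) < \<delta> \<and>
      (\<exists>D > 1. \<exists>c :: real. \<forall>\<^sub>F \<epsilon> in at_right 0.
         real (gate_complexity \<alpha> \<epsilon> U') > ln (1 / \<epsilon>) / ln D + c)"
    using U' \<open>D > 1\<close> unfolding hs_norm_eq_norm by blast
qed

end
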